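(* Let $p\ge0$ be an integer and $0<x<2\pi$. Then $$\sum_{k=1}^\infty\frac{\cos(kx)}{(2k-1)(2k)^p(2k+1)}=\begin{cases}\dfrac12-\dfrac{\pi}{4}\sin\dfrac x2-\displaystyle\sum_{j=1}^{p/2}\frac{\mathrm{Gl}_{2j}(x)}{2^{2j}}, & p\text{ even},\\[8pt] -\dfrac12-\dfrac12\cos\dfrac x2\,\ln\Big(\tan\dfrac x4\Big)+\dfrac12\ln\Big(2\sin\dfrac x2\Big)-\displaystyle\sum_{j=1}^{(p-1)/2}\frac{\mathrm{Cl}_{2j+1}(x)}{2^{2j+1}}, & p\text{ odd},\end{cases}$$ and $$\sum_{k=1}^\infty\frac{\sin(kx)}{(2k-1)(2k)^p(2k+1)}=\begin{cases}-\dfrac12\sin\dfrac x2\,\ln\Big(\tan\dfrac x4\Big)-\displaystyle\sum_{j=1}^{p/2}\frac{\mathrm{Cl}_{2j}(x)}{2^{2j}}, & p\text{ even},\\[8pt] \dfrac{\pi}{4}\cos\dfrac x2-\dfrac14(\pi-x)-\displaystyle\sum_{j=1}^{(p-1)/2}\frac{\mathrm{Gl}_{2j+1}(x)}{2^{2j+1}}, & p\text{ odd},\end{cases}$$ with empty sums equal to $0$.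
   Context: For integers $n\ge1$ the Clausen functions are $\mathrm{Cl}_{2n}(x)=\sum_{k\ge1}\frac{\sin(kx)}{k^{2n}}$, $\mathrm{Cl}_{2n+1}(x)=\sum_{k\ge1}\frac{\cos(kx)}{k^{2n+1}}$, $\mathrm{Gl}_{2n}(x)=\sum_{k\ge1}\frac{\cos(kx)}{k^{2n}}$, $\mathrm{Gl}_{2n+1}(x)=\sum_{k\ge1}\frac{\sin(kx)}{k^{2n+1}}$; equivalently $\operatorname{Li}_{2n}(e^{ix})=\mathrm{Gl}_{2n}(x)+i\,\mathrm{Cl}_{2n}(x)$ and $\operatorname{Li}_{2n+1}(e^{ix})=\mathrm{Cl}_{2n+1}(x)+i\,\mathrm{Gl}_{2n+1}(x)$. *)

theory Defs
  imports "HOL-Analysis.Analysis"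
begin

definition Cl :: "nat \<Rightarrow> real \<Rightarrow> real" where
  "Cl m x = (if even m
     then (\<Sum>k. sin (real (Suc k) * x) / real (Suc k) ^ m)
     else (\<Sum>k. cos (real (Suc k) * x) / real (Suc k) ^ m))"

definition Gl :: "nat \<Rightarrow> real \<Rightarrow> real" where
  "Gl m x = (if even m
     then (\<Sum>k. cos (real (Suc k) * x) / real (Suc k) ^ m)
     else (\<Sum>k. sin (real (Suc k) * x) / real (Suc k) ^ m))"

end

theory Submission
  imports Defs
begin

(* The partial fractions
     1 / ((2k-1) (2k)^(p+2) (2k+1)) = 1 / ((2k-1) (2k)^p (2k+1)) - 1 / (2k)^(p+2)
   lower p by two at the cost of one Clausen term of order p + 2, so everything reduces to
   p = 0 and p = 1. Splitting these weights further into 1/(2k-1), 1/(2k+1) and 1/k, the base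
   sums become combinations of sum e^(ikx)/k = -Log (1 - e^(ix)) and of its odd part at
   e^(ix/2), where Log (1 - e^(i phi)) = ln (2 sin (phi/2)) + i (phi - pi)/2 for 0 < phi < 2 pi.
   The logarithmic series converges on the closed unit disc minus {1}: its remainder after n
   terms is the integral of z (tz)^n / (1 - tz) over [0,1], and |1 - tz| >= (1 - Re z)/2 there. *)

lemma Re_less_one_if_norm_le_one:
  fixes z :: complex
  assumes "norm z \<le> 1" and "z \<noteq> 1"
  shows "Re z < 1"
proof (rule ccontr)
  assume "\<not> Re z < 1"
  with assms(1) have "Re z = 1"
    using complex_Re_le_cmod[of z] by linarith
  moreover have "(Re z)\<^sup>2 + (Im z)\<^sup>2 \<le> 1"
    using assms(1) by (simp add: cmod_def)
  ultimately show False
    using assms(2) by (simp add: complex_eq_iff)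
qed

lemma Re_one_minus_segment_ge:
  fixes z :: complex
  assumes "norm z \<le> 1" and "t \<in> {0..1}"
  shows "(1 - Re z) / 2 \<le> Re (1 - of_real t * z)"
proof -
  have "\<bar>Re z\<bar> \<le> 1"
    using abs_Re_le_cmod[of z] assms(1) by linarith
  moreover have "t * Re z \<le> max 0 (Re z)"
    using assms(2) by (cases "Re z \<ge> 0") (auto simp: mult_left_le_one_le mult_nonneg_nonpos)
  ultimately show ?thesis
    by auto
qed

lemma has_field_derivative_log_series_remainder:
  fixes u :: complex
  assumes "Re u < 1"
  shows "((\<lambda>v. - Ln (1 - v) - (\<Sum>k<n. v ^ Suc k / of_nat (Suc k)))
           has_field_derivative u ^ n / (1 - u)) (at u)"
proof -
  have "1 - u \<notin> \<real>\<^sub>\<le>\<^sub>0" and "u \<noteq> 1"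
    using assms by (auto simp: complex_nonpos_Reals_iff)
  then have Ln: "((\<lambda>v. Ln (1 - v)) has_field_derivative - inverse (1 - u)) (at u)"
    by (auto intro!: derivative_eq_intros)
  have power: "((\<lambda>v. v ^ Suc k / of_nat (Suc k)) has_field_derivative u ^ k) (at u)" for k
    using DERIV_cdivide[OF DERIV_power[OF DERIV_ident, where n="Suc k"], of "of_nat (Suc k)"]
    by (simp del: of_nat_Suc)
  have "((\<lambda>v. \<Sum>k<n. v ^ Suc k / of_nat (Suc k)) has_field_derivative (\<Sum>k<n. u ^ k)) (at u)"
    by (rule DERIV_sum) (rule power)
  from DERIV_diff[OF DERIV_minus[OF Ln] this]
  have "((\<lambda>v. - Ln (1 - v) - (\<Sum>k<n. v ^ Suc k / of_nat (Suc k)))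
           has_field_derivative inverse (1 - u) - (\<Sum>k<n. u ^ k)) (at u)"
    by (simp only: minus_minus)
  also have "inverse (1 - u) - (\<Sum>k<n. u ^ k) = u ^ n / (1 - u)"
    using \<open>u \<noteq> 1\<close> by (simp add: sum_gp_strict field_simps)
  finally show ?thesis .
qed

lemma has_integral_log_series_remainder:
  fixes z :: complex
  assumes "norm z \<le> 1" and "z \<noteq> 1"
  shows "((\<lambda>t. z * ((of_real t * z) ^ n / (1 - of_real t * z))) has_integral
           - Ln (1 - z) - (\<Sum>k<n. z ^ Suc k / of_nat (Suc k))) {0..1}"
proof -
  define R where "R v = - Ln (1 - v) - (\<Sum>k<n. v ^ Suc k / of_nat (Suc k))" for v
  have "((\<lambda>t. R (of_real t * z)) has_vector_derivative
           z * ((of_real t * z) ^ n / (1 - of_real t * z))) (at t within {0..1})"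
    if "t \<in> {0..1}" for t
  proof -
    have "Re (of_real t * z) < 1"
      using Re_one_minus_segment_ge[OF assms(1) that] Re_less_one_if_norm_le_one[OF assms] by simp
    note R' = has_field_derivative_log_series_remainder[OF this, of n, folded R_def]
    have "((\<lambda>t. of_real t * z) has_vector_derivative z) (at t)"
      by (auto intro!: derivative_eq_intros simp: has_vector_derivative_def scaleR_conv_of_real)
    from field_vector_diff_chain_at[OF this R']
    show ?thesis
      unfolding o_def by (rule has_vector_derivative_at_within)
  qed
  then show ?thesis
    using fundamental_theorem_of_calculus[of 0 1 "\<lambda>t. R (of_real t * z)"] by (simp add: R_def)
qed

lemma norm_log_series_remainder_le:
  fixes z :: complex
  assumes "norm z \<le> 1" and "z \<noteq> 1"
  shows "norm (- Ln (1 - z) - (\<Sum>k<n. z ^ Suc k / of_nat (Suc k)))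
           \<le> 2 / ((1 - Re z) * real (Suc n))"
proof -
  define c where "c = (1 - Re z) / 2"
  have "c > 0"
    using Re_less_one_if_norm_le_one[OF assms] by (simp add: c_def)
  have power: "((\<lambda>t. t ^ n / c) has_integral 1 / (c * real (Suc n))) {0..1}"
  proof -
    have "((\<lambda>t. t ^ Suc n / (c * real (Suc n))) has_real_derivative t ^ n / c) (at t within {0..1})"
      for t
      using DERIV_cdivide[OF DERIV_power[OF DERIV_ident, where n="Suc n"], of "c * real (Suc n)" t]
        \<open>c > 0\<close>
      by (simp del: of_nat_Suc)
    then show ?thesis
      using fundamental_theorem_of_calculus[of 0 1 "\<lambda>t. t ^ Suc n / (c * real (Suc n))"]
      by (simp add: has_real_derivative_iff_has_vector_derivative)
  qed
  have bound: "norm (z * ((of_real t * z) ^ n / (1 - of_real t * z))) \<le> t ^ n / c"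
    if "t \<in> {0..1}" for t
  proof -
    have "c \<le> Re (1 - of_real t * z)"
      using Re_one_minus_segment_ge[OF assms(1) that] by (simp add: c_def)
    then have "c \<le> norm (1 - of_real t * z)"
      using complex_Re_le_cmod by (rule order_trans)
    have "norm (z * ((of_real t * z) ^ n / (1 - of_real t * z)))
            = t ^ n * norm z ^ Suc n / norm (1 - of_real t * z)"
      using that by (simp add: norm_mult norm_divide norm_power power_mult_distrib)
    also have "\<dots> \<le> t ^ n / c"
    proof (rule frac_le)
      show "t ^ n * norm z ^ Suc n \<le> t ^ n"
        using that assms(1) by (intro mult_right_le_one_le power_le_one) auto
    qed (use that \<open>c > 0\<close> \<open>c \<le> norm (1 - of_real t * z)\<close> in auto)
    finally show ?thesis .
  qed
  note remainder = has_integral_log_series_remainder[OF assms, of n]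
  from integral_norm_bound_integral[OF has_integral_integrable[OF remainder]
      has_integral_integrable[OF power] bound]
  show ?thesis
    unfolding integral_unique[OF remainder] integral_unique[OF power] by (simp add: c_def)
qed

lemma sums_log_series:
  fixes z :: complex
  assumes "norm z \<le> 1" and "z \<noteq> 1"
  shows "(\<lambda>k. z ^ Suc k / of_nat (Suc k)) sums (- Ln (1 - z))"
  unfolding sums_def
proof (rule LIM_zero_cancel, rule Lim_null_comparison)
  show "\<forall>\<^sub>F n in sequentially. norm ((\<Sum>k<n. z ^ Suc k / of_nat (Suc k)) - - Ln (1 - z))
          \<le> 2 / (1 - Re z) * inverse (real (Suc n))"
  proof (intro always_eventually allI)
    fix n
    have "norm ((\<Sum>k<n. z ^ Suc k / of_nat (Suc k)) - - Ln (1 - z))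
            = norm (- Ln (1 - z) - (\<Sum>k<n. z ^ Suc k / of_nat (Suc k)))"
      by (rule norm_minus_commute)
    also have "\<dots> \<le> 2 / ((1 - Re z) * real (Suc n))"
      by (rule norm_log_series_remainder_le[OF assms])
    also have "\<dots> = 2 / (1 - Re z) * inverse (real (Suc n))"
      by (simp add: field_simps)
    finally show "norm ((\<Sum>k<n. z ^ Suc k / of_nat (Suc k)) - - Ln (1 - z))
                    \<le> 2 / (1 - Re z) * inverse (real (Suc n))" .
  qed
  show "(\<lambda>n. 2 / (1 - Re z) * inverse (real (Suc n))) \<longlonglongrightarrow> 0"
    by (intro tendsto_mult_right_zero LIMSEQ_inverse_real_of_nat)
qed

lemma one_minus_cis: "1 - cis \<phi> = of_real (2 * sin (\<phi> / 2)) * cis ((\<phi> - pi) / 2)"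
proof -
  have "cis ((\<phi> - pi) / 2) = - \<i> * cis (\<phi> / 2)"
    by (simp add: complex_eq_iff diff_divide_distrib cos_diff sin_diff)
  moreover have "cos \<phi> = 1 - 2 * sin (\<phi> / 2) ^ 2" and "sin \<phi> = 2 * sin (\<phi> / 2) * cos (\<phi> / 2)"
    using cos_double_sin[of "\<phi> / 2"] sin_double[of "\<phi> / 2"] by simp_all
  ultimately show ?thesis
    by (simp add: complex_eq_iff power2_eq_square)
qed

lemma cis_neq_one:
  assumes "0 < \<phi>" and "\<phi> < 2 * pi"
  shows "cis \<phi> \<noteq> 1"
proof -
  have "sin (\<phi> / 2) > 0"
    using assms by (intro sin_gt_zero) auto
  then have "1 - cis \<phi> \<noteq> 0"
    by (simp only: one_minus_cis) simp
  then show ?thesis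
    by simp
qed

lemma Ln_one_minus_cis:
  assumes "0 < \<phi>" and "\<phi> < 2 * pi"
  shows "Ln (1 - cis \<phi>) = Complex (ln (2 * sin (\<phi> / 2))) ((\<phi> - pi) / 2)"
proof -
  have "sin (\<phi> / 2) > 0"
    using assms by (intro sin_gt_zero) auto
  then have "Ln (1 - cis \<phi>) = of_real (ln (2 * sin (\<phi> / 2))) + Ln (cis ((\<phi> - pi) / 2))"
    unfolding one_minus_cis by (simp add: Ln_times_of_real Ln_of_real del: of_real_mult)
  also have "Ln (cis ((\<phi> - pi) / 2)) = of_real ((\<phi> - pi) / 2) * \<i>"
    using assms by (intro Ln_cis) auto
  finally show ?thesis
    by (simp add: complex_eq_iff)
qed

lemma Ln_one_plus_cis:
  assumes "- pi < \<theta>" and "\<theta> < pi"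
  shows "Ln (1 + cis \<theta>) = Complex (ln (2 * cos (\<theta> / 2))) (\<theta> / 2)"
proof -
  have "1 + cis \<theta> = 1 - cis (\<theta> + pi)"
    by (simp add: complex_eq_iff)
  moreover have "sin ((\<theta> + pi) / 2) = cos (\<theta> / 2)"
    by (simp add: add_divide_distrib sin_add)
  ultimately show ?thesis
    using Ln_one_minus_cis[of "\<theta> + pi"] assms by simp
qed

lemma sums_odd_log_series:
  fixes z :: complex
  assumes "norm z \<le> 1" and "z \<noteq> 1" and "z \<noteq> -1"
  shows "(\<lambda>m. z ^ (2 * m + 1) / of_nat (2 * m + 1)) sums ((Ln (1 + z) - Ln (1 - z)) / 2)"
proof -
  define f where "f k = (z ^ Suc k - (- z) ^ Suc k) / of_nat (Suc k) / 2" for k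
  have "f sums ((- Ln (1 - z) - - Ln (1 - - z)) / 2)"
    unfolding f_def diff_divide_distrib
    using assms by (intro sums_divide sums_diff sums_log_series) (auto simp: minus_equation_iff)
  moreover have "f k = 0" if "k \<notin> range (\<lambda>m. 2 * m)" for k
  proof -
    have "even (Suc k)"
      using that by (auto elim!: oddE)
    then show ?thesis
      by (simp add: f_def)
  qed
  ultimately have "(\<lambda>m. f (2 * m)) sums ((Ln (1 + z) - Ln (1 - z)) / 2)"
    by (subst sums_mono_reindex) (auto simp: strict_mono_def)
  moreover have "f (2 * m) = z ^ (2 * m + 1) / of_nat (2 * m + 1)" for m
    by (simp add: f_def del: of_nat_Suc of_nat_add)
  ultimately show ?thesis
    by simp
qed

lemma sums_cis_odd_multiples:
  assumes "0 < \<theta>" and "\<theta> < pi"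
  shows "(\<lambda>m. cis (real (2 * m + 1) * \<theta>) / of_nat (2 * m + 1))
           sums Complex (- ln (tan (\<theta> / 2)) / 2) (pi / 4)"
proof -
  have "sin (\<theta> / 2) > 0" and "cos (\<theta> / 2) > 0"
    using assms by (auto intro!: sin_gt_zero cos_gt_zero)
  then have "(Ln (1 + cis \<theta>) - Ln (1 - cis \<theta>)) / 2 = Complex (- ln (tan (\<theta> / 2)) / 2) (pi / 4)"
    using assms by (simp add: Ln_one_plus_cis Ln_one_minus_cis complex_eq_iff tan_def ln_div ln_mult)
        (simp add: field_simps)
  moreover have "cis \<theta> \<noteq> 1"
    using cis_neq_one[of \<theta>] assms by simp
  moreover have "cis \<theta> \<noteq> -1"
  proof -
    have "cis (\<theta> + pi) = - cis \<theta>"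
      by (simp add: complex_eq_iff)
    then show ?thesis
      using cis_neq_one[of "\<theta> + pi"] assms by auto
  qed
  ultimately show ?thesis
    using sums_odd_log_series[of "cis \<theta>", unfolded Complex.DeMoivre] by simp
qed

lemma sums_cis_over_odd:
  assumes "0 < x" and "x < 2 * pi"
  defines "V \<equiv> Complex (- ln (tan (x / 4)) / 2) (pi / 4)"
  shows "(\<lambda>k. (1 / (2 * real (Suc k) - 1)) *\<^sub>R cis (real (Suc k) * x)) sums (cis (x / 2) * V)"
    and "(\<lambda>k. (1 / (2 * real (Suc k) + 1)) *\<^sub>R cis (real (Suc k) * x))
           sums (cis (- x / 2) * (V - cis (x / 2)))"
proof -
  define g where "g m = cis (real (2 * m + 1) * (x / 2)) / of_nat (2 * m + 1)" for m
  have "g sums V"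
    using sums_cis_odd_multiples[of "x / 2"] assms unfolding g_def[abs_def] V_def by simp
  have "cis (x / 2) * g k = (1 / (2 * real (Suc k) - 1)) *\<^sub>R cis (real (Suc k) * x)" for k
  proof -
    have "x / 2 + real (2 * k + 1) * (x / 2) = real (Suc k) * x"
      by (simp add: field_simps)
    then show ?thesis
      by (simp add: g_def cis_mult mult.assoc[symmetric] scaleR_conv_of_real del: of_nat_Suc)
        (simp add: field_simps)
  qed
  with sums_mult[OF \<open>g sums V\<close>, of "cis (x / 2)"]
  show "(\<lambda>k. (1 / (2 * real (Suc k) - 1)) *\<^sub>R cis (real (Suc k) * x)) sums (cis (x / 2) * V)"
    by simp
  have "cis (- x / 2) * g (Suc k) = (1 / (2 * real (Suc k) + 1)) *\<^sub>R cis (real (Suc k) * x)" for k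
  proof -
    have "- x / 2 + real (2 * Suc k + 1) * (x / 2) = real (Suc k) * x"
      by (simp add: field_simps)
    then show ?thesis
      by (simp add: g_def cis_mult mult.assoc[symmetric] scaleR_conv_of_real del: of_nat_Suc)
        (simp add: field_simps)
  qed
  moreover have "(\<lambda>k. g (Suc k)) sums (V - cis (x / 2))"
    using \<open>g sums V\<close> by (subst sums_Suc_iff) (simp add: g_def)
  ultimately show "(\<lambda>k. (1 / (2 * real (Suc k) + 1)) *\<^sub>R cis (real (Suc k) * x))
                     sums (cis (- x / 2) * (V - cis (x / 2)))"
    using sums_mult[of "\<lambda>k. g (Suc k)" "V - cis (x / 2)" "cis (- x / 2)"] by simp
qed

lemma sums_cis_harmonic:
  assumes "0 < x" and "x < 2 * pi"
  shows "(\<lambda>k. (1 / real (Suc k)) *\<^sub>R cis (real (Suc k) * x))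
           sums Complex (- ln (2 * sin (x / 2))) ((pi - x) / 2)"
proof -
  have "(\<lambda>k. (1 / real (Suc k)) *\<^sub>R cis (real (Suc k) * x)) sums (- Ln (1 - cis x))"
    using sums_log_series[of "cis x", unfolded Complex.DeMoivre] cis_neq_one[OF assms]
    by (simp add: scaleR_conv_of_real field_simps del: of_nat_Suc)
  also have "- Ln (1 - cis x) = Complex (- ln (2 * sin (x / 2))) ((pi - x) / 2)"
    by (simp add: Ln_one_minus_cis[OF assms] complex_eq_iff field_simps)
  finally show ?thesis .
qed

lemma sums_cis_over_odd_neighbours_power_0:
  assumes "0 < x" and "x < 2 * pi"
  shows "(\<lambda>k. (1 / ((2 * real (Suc k) - 1) * (2 * real (Suc k) + 1))) *\<^sub>R cis (real (Suc k) * x))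
           sums Complex (1/2 - pi/4 * sin (x/2)) (- 1/2 * sin (x/2) * ln (tan (x/4)))"
proof -
  define V where "V = Complex (- ln (tan (x / 4)) / 2) (pi / 4)"
  define c where "c k = cis (real (Suc k) * x)" for k
  note minus = sums_cis_over_odd(1)[OF assms, folded V_def c_def]
  note plus = sums_cis_over_odd(2)[OF assms, folded V_def c_def]
  have "(1/2) *\<^sub>R ((1 / (2 * y - 1)) *\<^sub>R c k - (1 / (2 * y + 1)) *\<^sub>R c k)
          = (1 / ((2 * y - 1) * (2 * y + 1))) *\<^sub>R c k"
    if "y = real (Suc k)" for y k
  proof -
    have "2 * y - 1 > 0" and "2 * y + 1 > 0"
      using that by auto
    then show ?thesis
      by (simp add: scaleR_diff_left[symmetric] field_simps)
  qed
  moreover have "(1/2) *\<^sub>R (cis (x / 2) * V - cis (- x / 2) * (V - cis (x / 2)))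
                   = Complex (1/2 - pi/4 * sin (x/2)) (- 1/2 * sin (x/2) * ln (tan (x/4)))"
    by (simp add: V_def complex_eq_iff field_simps)
  ultimately show ?thesis
    using sums_scaleR_right[OF sums_diff[OF minus plus], of "1/2"] unfolding c_def by simp
qed

lemma sums_cis_over_odd_neighbours_power_1:
  assumes "0 < x" and "x < 2 * pi"
  shows "(\<lambda>k. (1 / ((2 * real (Suc k) - 1) * (2 * real (Suc k)) * (2 * real (Suc k) + 1)))
               *\<^sub>R cis (real (Suc k) * x))
           sums Complex (- 1/2 - 1/2 * cos (x/2) * ln (tan (x/4)) + 1/2 * ln (2 * sin (x/2)))
                        (pi/4 * cos (x/2) - 1/4 * (pi - x))"
proof -
  define V where "V = Complex (- ln (tan (x / 4)) / 2) (pi / 4)"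
  define c where "c k = cis (real (Suc k) * x)" for k
  note minus = sums_cis_over_odd(1)[OF assms, folded V_def c_def]
  note plus = sums_cis_over_odd(2)[OF assms, folded V_def c_def]
  note harmonic = sums_cis_harmonic[OF assms, folded c_def]
  have "(1/2) *\<^sub>R ((1 / (2 * y - 1)) *\<^sub>R c k - (1 / y) *\<^sub>R c k + (1 / (2 * y + 1)) *\<^sub>R c k)
          = (1 / ((2 * y - 1) * (2 * y) * (2 * y + 1))) *\<^sub>R c k"
    if "y = real (Suc k)" for y k
  proof -
    have "2 * y - 1 > 0" and "2 * y + 1 > 0" and "y > 0"
      using that by auto
    then show ?thesis
      by (simp add: scaleR_diff_left[symmetric] scaleR_add_left[symmetric] field_simps)
  qed
  moreover have "sin (x / 2) ^ 2 + cos (x / 2) ^ 2 = 1"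
    by simp
  then have "(1/2) *\<^sub>R (cis (x / 2) * V - Complex (- ln (2 * sin (x / 2))) ((pi - x) / 2)
                         + cis (- x / 2) * (V - cis (x / 2)))
               = Complex (- 1/2 - 1/2 * cos (x/2) * ln (tan (x/4)) + 1/2 * ln (2 * sin (x/2)))
                         (pi/4 * cos (x/2) - 1/4 * (pi - x))"
    by (simp add: V_def complex_eq_iff field_simps power2_eq_square)
  ultimately show ?thesis
    using sums_scaleR_right[OF sums_add[OF sums_diff[OF minus harmonic] plus], of "1/2"]
    unfolding c_def by simp
qed

lemma divide_odd_neighbours_power_add_two:
  fixes y a :: real
  assumes "1/2 < y"
  shows "a / ((2 * y - 1) * (2 * y) ^ (p + 2) * (2 * y + 1))
           = a / ((2 * y - 1) * (2 * y) ^ p * (2 * y + 1)) - a / y ^ (p + 2) / 2 ^ (p + 2)"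
proof -
  have key: "a / ((2 * y - 1) * (Q * (4 * y\<^sup>2)) * (2 * y + 1))
               = a / ((2 * y - 1) * Q * (2 * y + 1)) - a / (Q * (4 * y\<^sup>2))"
    if "Q > 0" for Q
  proof -
    have "2 * y - 1 \<noteq> 0" and "2 * y + 1 \<noteq> 0" and "y \<noteq> 0" and "Q \<noteq> 0"
      using assms that by auto
    then show ?thesis
      by (simp add: divide_simps) (simp add: algebra_simps power2_eq_square)
  qed
  have powers: "(2 * y) ^ (p + 2) = (2 * y) ^ p * (4 * y\<^sup>2)"
    "y ^ (p + 2) * 2 ^ (p + 2) = (2 * y) ^ p * (4 * y\<^sup>2)"
    by (simp_all add: power_add power_mult_distrib power2_eq_square)
  show ?thesis
    unfolding divide_divide_eq_left powers by (rule key) (use assms in simp)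
qed

lemma summable_bounded_divide_power:
  fixes a :: "nat \<Rightarrow> real"
  assumes "\<And>k. \<bar>a k\<bar> \<le> B" and "2 \<le> q"
  shows "summable (\<lambda>k. a k / real (Suc k) ^ q)"
proof (rule summable_comparison_test')
  have "summable (\<lambda>k. inverse (real k ^ q))"
    using assms(2) by (rule inverse_power_summable)
  then have "summable (\<lambda>k. inverse (real (Suc k) ^ q))"
    by (simp only: summable_Suc_iff[of "\<lambda>k. inverse (real k ^ q)"])
  then show "summable (\<lambda>k. B / real (Suc k) ^ q)"
    unfolding divide_inverse by (rule summable_mult)
  show "norm (a k / real (Suc k) ^ q) \<le> B / real (Suc k) ^ q" for k
    unfolding real_norm_def abs_divide abs_of_nonneg[OF zero_le_power[OF of_nat_0_le_iff]]
    using assms(1) by (rule divide_right_mono) simp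
qed

lemma sums_odd_neighbours_power_add_two:
  fixes a :: "nat \<Rightarrow> real"
  assumes "summable (\<lambda>k. a k / real (Suc k) ^ (p + 2))"
    and "(\<lambda>k. a k / ((2 * real (Suc k) - 1) * (2 * real (Suc k)) ^ p * (2 * real (Suc k) + 1))) sums s"
  shows "(\<lambda>k. a k / ((2 * real (Suc k) - 1) * (2 * real (Suc k)) ^ (p + 2) * (2 * real (Suc k) + 1)))
           sums (s - (\<Sum>k. a k / real (Suc k) ^ (p + 2)) / 2 ^ (p + 2))"
proof -
  have partial_fractions:
    "a k / ((2 * real (Suc k) - 1) * (2 * real (Suc k)) ^ (p + 2) * (2 * real (Suc k) + 1))
       = a k / ((2 * real (Suc k) - 1) * (2 * real (Suc k)) ^ p * (2 * real (Suc k) + 1))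
         - a k / real (Suc k) ^ (p + 2) / 2 ^ (p + 2)" for k
    by (rule divide_odd_neighbours_power_add_two) simp
  show ?thesis
    unfolding partial_fractions
    by (rule sums_diff[OF assms(2) sums_divide[OF summable_sums[OF assms(1)]]])
qed

lemma sums_odd_neighbours_power_add_even:
  fixes a :: "nat \<Rightarrow> real"
  assumes "\<And>k. \<bar>a k\<bar> \<le> B"
    and "(\<lambda>k. a k / ((2 * real (Suc k) - 1) * (2 * real (Suc k)) ^ r * (2 * real (Suc k) + 1))) sums s"
  shows "(\<lambda>k. a k / ((2 * real (Suc k) - 1) * (2 * real (Suc k)) ^ (2 * m + r) * (2 * real (Suc k) + 1)))
           sums (s - (\<Sum>j=1..m. (\<Sum>k. a k / real (Suc k) ^ (2 * j + r)) / 2 ^ (2 * j + r)))"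
proof (induction m)
  case 0
  then show ?case
    using assms(2) by simp
next
  case (Suc m)
  have "summable (\<lambda>k. a k / real (Suc k) ^ ((2 * m + r) + 2))"
    using assms(1) by (rule summable_bounded_divide_power) simp
  from sums_odd_neighbours_power_add_two[OF this Suc.IH]
  show ?case
    by (simp add: algebra_simps)
qed

theorem corollary6:
  fixes p :: nat and x :: real
  assumes "0 < x" and "x < 2 * pi"
  shows "((\<lambda>k. cos (real (Suc k) * x) /
            ((2 * real (Suc k) - 1) * (2 * real (Suc k)) ^ p * (2 * real (Suc k) + 1)))
         sums
         (if even p
          then 1/2 - pi/4 * sin (x/2) - (\<Sum>j=1..p div 2. Gl (2*j) x / 2 ^ (2*j))
          else - 1/2 - 1/2 * cos (x/2) * ln (tan (x/4)) + 1/2 * ln (2 * sin (x/2))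
               - (\<Sum>j=1..(p - 1) div 2. Cl (2*j+1) x / 2 ^ (2*j+1)))
       \<and>
         (\<lambda>k. sin (real (Suc k) * x) /
            ((2 * real (Suc k) - 1) * (2 * real (Suc k)) ^ p * (2 * real (Suc k) + 1)))
         sums
         (if even p
          then - 1/2 * sin (x/2) * ln (tan (x/4)) - (\<Sum>j=1..p div 2. Cl (2*j) x / 2 ^ (2*j))
          else pi/4 * cos (x/2) - 1/4 * (pi - x)
               - (\<Sum>j=1..(p - 1) div 2. Gl (2*j+1) x / 2 ^ (2*j+1))))"
proof -
  let ?w = "\<lambda>p k. (2 * real (Suc k) - 1) * (2 * real (Suc k)) ^ p * (2 * real (Suc k) + 1)"
  have cos_bound: "\<bar>cos (real (Suc k) * x)\<bar> \<le> 1" and sin_bound: "\<bar>sin (real (Suc k) * x)\<bar> \<le> 1"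
    for k
    by simp_all
  note base = sums_cis_over_odd_neighbours_power_0[OF assms]
    sums_cis_over_odd_neighbours_power_1[OF assms]
  have p0: "(\<lambda>k. cos (real (Suc k) * x) / ?w 0 k) sums (1/2 - pi/4 * sin (x/2))"
    "(\<lambda>k. sin (real (Suc k) * x) / ?w 0 k) sums (- 1/2 * sin (x/2) * ln (tan (x/4)))"
    using sums_Re[OF base(1)] sums_Im[OF base(1)] by simp_all
  have p1: "(\<lambda>k. cos (real (Suc k) * x) / ?w 1 k)
              sums (- 1/2 - 1/2 * cos (x/2) * ln (tan (x/4)) + 1/2 * ln (2 * sin (x/2)))"
    "(\<lambda>k. sin (real (Suc k) * x) / ?w 1 k) sums (pi/4 * cos (x/2) - 1/4 * (pi - x))"
    using sums_Re[OF base(2)] sums_Im[OF base(2)] by simp_all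
  show ?thesis
  proof (cases "even p")
    case True
    then obtain m where "p = 2 * m"
      by blast
    with sums_odd_neighbours_power_add_even[OF cos_bound p0(1), of m]
      sums_odd_neighbours_power_add_even[OF sin_bound p0(2), of m]
    show ?thesis
      by (simp add: Gl_def Cl_def)
  next
    case False
    then obtain m where "p = 2 * m + 1"
      by (blast elim: oddE)
    with sums_odd_neighbours_power_add_even[OF cos_bound p1(1), of m]
      sums_odd_neighbours_power_add_even[OF sin_bound p1(2), of m]
    show ?thesis
      by (simp add: Gl_def Cl_def)
  qed
qed

end
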